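(* Let $U=U_1\times\cdots\times U_m\subset\mathbb{R}^m_+$ (each $U_i\subseteq\mathbb{R}$) be a convex set, $C\subseteq\mathbb{R}^m$, $\overline{U}=U\cap C$. Let $\rho_{\rm adapt}=\rho(\Pi(\overline{U}^\downarrow),\overline{U}^\downarrow)$, $\rho_{\rm aro}=\rho(U^\downarrow,\overline{U}^\downarrow)$ and $\gamma_{\rm ro}=\gamma(U^\downarrow,\Pi(\overline{U}^\downarrow))$. Then $$\rho_{\rm adapt}\ge\frac{\rho_{\rm aro}}{\gamma_{\rm ro}}.$$
   Context: For $S\subseteq\mathbb{R}^m_+$, $S^\downarrow=\{t\in\mathbb{R}^m_+:\exists s\in S,\ t\le s\text{ componentwise}\}$. $\Pi_i(S)$ is the projection of $S$ onto coordinate $i$ and $\Pi(S)=\Pi_1(S)\times\cdots\times\Pi_m(S)$. For $r\ge0$, $rS=\{rx:x\in S\}$; $\rho(S_1,S_2)=\max\{\rho\ge0:\rho S_1\subseteq S_2\}$, $\gamma(S_1,S_2)=\min\{\gamma\ge0:S_2\subseteq\gamma S_1\}$. *)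

theory Defs
  imports "HOL-Analysis.Analysis"
begin

definition nonneg_orthant :: "(real^'m) set" where
  "nonneg_orthant = {x. \<forall>i. 0 \<le> x$i}"

definition down :: "(real^'m) set \<Rightarrow> (real^'m) set" where
  "down S = {t. (\<forall>i. 0 \<le> t$i) \<and> (\<exists>s\<in>S. \<forall>i. t$i \<le> s$i)}"

definition proj :: "'m \<Rightarrow> (real^'m) set \<Rightarrow> real set" where
  "proj i S = (\<lambda>x. x$i) ` S"

definition Proj :: "(real^'m) set \<Rightarrow> (real^'m) set" where
  "Proj S = {x. \<forall>i. x$i \<in> proj i S}"

definition rho :: "(real^'m) set \<Rightarrow> (real^'m) set \<Rightarrow> real" where
  "rho S1 S2 = (GREATEST r. r \<ge> 0 \<and> (\<lambda>x. r *\<^sub>R x) ` S1 \<subseteq> S2)"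

definition gamma :: "(real^'m) set \<Rightarrow> (real^'m) set \<Rightarrow> real" where
  "gamma S1 S2 = (LEAST g. g \<ge> 0 \<and> S2 \<subseteq> (\<lambda>x. g *\<^sub>R x) ` S1)"

text \<open>Well-definedness (the max / min in the definitions is attained).\<close>
definition rho_exists :: "(real^'m) set \<Rightarrow> (real^'m) set \<Rightarrow> bool" where
  "rho_exists S1 S2 = (\<exists>r. r \<ge> 0 \<and> (\<lambda>x. r *\<^sub>R x) ` S1 \<subseteq> S2 \<and>
      (\<forall>r'. r' \<ge> 0 \<and> (\<lambda>x. r' *\<^sub>R x) ` S1 \<subseteq> S2 \<longrightarrow> r' \<le> r))"

definition gamma_exists :: "(real^'m) set \<Rightarrow> (real^'m) set \<Rightarrow> bool" where
  "gamma_exists S1 S2 = (\<exists>g. g \<ge> 0 \<and> S2 \<subseteq> (\<lambda>x. g *\<^sub>R x) ` S1 \<and>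
      (\<forall>g'. g' \<ge> 0 \<and> S2 \<subseteq> (\<lambda>x. g' *\<^sub>R x) ` S1 \<longrightarrow> g \<le> g'))"

end

theory Submission
  imports Defs
begin

text \<open>If \<open>S\<^sub>2 \<subseteq> \<gamma> S\<^sub>1\<close> and \<open>\<rho> S\<^sub>1 \<subseteq> S\<^sub>3\<close>, then \<open>(\<rho>/\<gamma>) S\<^sub>2 \<subseteq> S\<^sub>3\<close>, so the maximal
  scaling of \<open>S\<^sub>2\<close> into \<open>S\<^sub>3\<close> is at least \<open>\<rho>/\<gamma>\<close>.\<close>

lemma rho_exists_rho:
  assumes "rho_exists S1 S2"
  shows rho_nonneg: "rho S1 S2 \<ge> 0"
    and rho_scaled_subset: "(\<lambda>x. rho S1 S2 *\<^sub>R x) ` S1 \<subseteq> S2"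
    and rho_greatest: "\<And>r. r \<ge> 0 \<Longrightarrow> (\<lambda>x. r *\<^sub>R x) ` S1 \<subseteq> S2 \<Longrightarrow> r \<le> rho S1 S2"
proof -
  obtain r where r: "r \<ge> 0" "(\<lambda>x. r *\<^sub>R x) ` S1 \<subseteq> S2"
    "\<forall>r'. r' \<ge> 0 \<and> (\<lambda>x. r' *\<^sub>R x) ` S1 \<subseteq> S2 \<longrightarrow> r' \<le> r"
    using assms unfolding rho_exists_def by blast
  have "rho S1 S2 = r"
    unfolding rho_def by (rule Greatest_equality) (use r in auto)
  with r show "rho S1 S2 \<ge> 0" "(\<lambda>x. rho S1 S2 *\<^sub>R x) ` S1 \<subseteq> S2"
    and "\<And>r'. r' \<ge> 0 \<Longrightarrow> (\<lambda>x. r' *\<^sub>R x) ` S1 \<subseteq> S2 \<Longrightarrow> r' \<le> rho S1 S2"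
    by auto
qed

lemma gamma_exists_gamma:
  assumes "gamma_exists S1 S2"
  shows gamma_nonneg: "gamma S1 S2 \<ge> 0"
    and subset_gamma_scaled: "S2 \<subseteq> (\<lambda>x. gamma S1 S2 *\<^sub>R x) ` S1"
proof -
  obtain g where g: "g \<ge> 0" "S2 \<subseteq> (\<lambda>x. g *\<^sub>R x) ` S1"
    "\<forall>g'. g' \<ge> 0 \<and> S2 \<subseteq> (\<lambda>x. g' *\<^sub>R x) ` S1 \<longrightarrow> g \<le> g'"
    using assms unfolding gamma_exists_def by blast
  have "gamma S1 S2 = g"
    unfolding gamma_def by (rule Least_equality) (use g in auto)
  with g show "gamma S1 S2 \<ge> 0" "S2 \<subseteq> (\<lambda>x. gamma S1 S2 *\<^sub>R x) ` S1"
    by auto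
qed

lemma scaled_subset_div:
  fixes S1 S2 S3 :: "'a::real_vector set"
  assumes "g \<noteq> 0" and S2_sub: "S2 \<subseteq> (\<lambda>x. g *\<^sub>R x) ` S1"
    and S1_sub: "(\<lambda>x. a *\<^sub>R x) ` S1 \<subseteq> S3"
  shows "(\<lambda>x. (a / g) *\<^sub>R x) ` S2 \<subseteq> S3"
proof
  fix z assume "z \<in> (\<lambda>x. (a / g) *\<^sub>R x) ` S2"
  then obtain y where "y \<in> S1" "z = (a / g) *\<^sub>R (g *\<^sub>R y)"
    using S2_sub by blast
  then have "y \<in> S1" "z = a *\<^sub>R y"
    using \<open>g \<noteq> 0\<close> by simp_all
  then show "z \<in> S3"
    using S1_sub by blast
qed

lemma rho_ge_rho_div_gamma:
  assumes "rho_exists S2 S3" "rho_exists S1 S3" "gamma_exists S1 S2"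
  shows "rho S2 S3 \<ge> rho S1 S3 / gamma S1 S2"
proof (cases "gamma S1 S2 = 0")
  case True
  \<comment> \<open>the right-hand side is then the junk value \<open>x / 0 = 0\<close>\<close>
  then show ?thesis
    using rho_nonneg[OF assms(1)] by simp
next
  case False
  have "(\<lambda>x. (rho S1 S3 / gamma S1 S2) *\<^sub>R x) ` S2 \<subseteq> S3"
    using scaled_subset_div[OF False subset_gamma_scaled[OF assms(3)]
        rho_scaled_subset[OF assms(2)]] .
  moreover have "rho S1 S3 / gamma S1 S2 \<ge> 0"
    using rho_nonneg[OF assms(2)] gamma_nonneg[OF assms(3)] by simp
  ultimately show ?thesis
    using rho_greatest[OF assms(1)] by blast
qed

theorem lemma4:
  fixes U C :: "(real^'m) set" and Ui :: "'m \<Rightarrow> real set"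
  assumes U_prod: "U = {x. \<forall>i. x$i \<in> Ui i}"
    and U_convex: "convex U"
    and U_nonneg: "U \<subseteq> nonneg_orthant"
    and ex_adapt: "rho_exists (Proj (down (U \<inter> C))) (down (U \<inter> C))"
    and ex_aro: "rho_exists (down U) (down (U \<inter> C))"
    and ex_ro: "gamma_exists (down U) (Proj (down (U \<inter> C)))"
  shows "rho (Proj (down (U \<inter> C))) (down (U \<inter> C))
           \<ge> rho (down U) (down (U \<inter> C)) / gamma (down U) (Proj (down (U \<inter> C)))"
  using rho_ge_rho_div_gamma[OF ex_adapt ex_aro ex_ro] .

end
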